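(* Any sequence $g_1,g_2,\dots\in\mathrm{PGL}_n(\mathbb C)$ contains a subsequence that converges to some point of $\mathrm{Hinge}^*_n$, in the following sense: there is a hinge $(P_1,\dots,P_k)$ and, for each $\sigma=1,\dots,k$, a sequence $\beta^{(\sigma)}_j\in\mathbb C^*$, such that (for representatives of the $g_j$ in $\mathrm{GL}_n(\mathbb C)$ along the subsequence) $\mathrm{graph}(\beta^{(\sigma)}_jg_j)$ converges to $P_\sigma$ in the Grassmannian $\mathrm{Gr}_n$ of $n$-dimensional subspaces of $\mathbb C^n\oplus\mathbb C^n$, for every $\sigma$.
   Context: Let $V=\mathbb C^n$. For a linear subspace (linear relation) $P\subset V\oplus V$: $\mathrm{Ker}\,P=\{v: v\oplus0\in P\}$, $\mathrm{Dom}\,P$ and $\mathrm{Im}\,P$ are the projections of $P$ to the first and second summands, $\mathrm{Indef}\,P=\{w:0\oplus w\in P\}$, $\mathrm{rk}\,P=\dim\mathrm{Dom}\,P-\dim\mathrm{Ker}\,P$. A hinge is a sequence $(P_1,\dots,P_k)$ of $n$-dimensional subspaces of $V\oplus V$ such that $\mathrm{Ker}\,P_j=\mathrm{Dom}\,P_{j+1}$ and $\mathrm{Im}\,P_j=\mathrm{Indef}\,P_{j+1}$ for $1\le j\le k-1$, $\mathrm{Dom}\,P_1=V$, $\mathrm{Im}\,P_k=V$, and $\mathrm{rk}\,P_j>0$ for all $j$. $\mathrm{Hinge}^*_n$ is the set of hinges modulo $(P_1,\dots,P_k)\sim(c_1P_1,\dots,c_kP_k)$, $c_j\in\mathbb C^*$,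 where $c\cdot P=\{v\oplus cw:v\oplus w\in P\}$. The graph of an operator $A$ is $\{v\oplus Av\}$. *)

theory Defs
  imports "HOL-Analysis.Analysis"
begin

text \<open>V = complex^'n (n = CARD('n)); V \<oplus> V is represented as pairs.\<close>

definition vscale :: "complex \<Rightarrow> complex ^ 'n \<Rightarrow> complex ^ 'n" where
  "vscale c v = c *s v"

definition pscale :: "complex \<Rightarrow> (complex ^ 'n) \<times> (complex ^ 'n) \<Rightarrow> (complex ^ 'n) \<times> (complex ^ 'n)" where
  "pscale c p = (c *s fst p, c *s snd p)"

definition csub2 :: "((complex ^ 'n) \<times> (complex ^ 'n)) set \<Rightarrow> bool" where
  "csub2 P = module.subspace pscale P"

definition cdim2 :: "((complex ^ 'n) \<times> (complex ^ 'n)) set \<Rightarrow> nat" where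
  "cdim2 P = vector_space.dim pscale P"

definition cdimV :: "(complex ^ 'n) set \<Rightarrow> nat" where
  "cdimV S = vector_space.dim vscale S"

definition Ker :: "((complex ^ 'n) \<times> (complex ^ 'n)) set \<Rightarrow> (complex ^ 'n) set" where
  "Ker P = {v. (v, 0) \<in> P}"

definition Dom :: "((complex ^ 'n) \<times> (complex ^ 'n)) set \<Rightarrow> (complex ^ 'n) set" where
  "Dom P = fst ` P"

definition Im :: "((complex ^ 'n) \<times> (complex ^ 'n)) set \<Rightarrow> (complex ^ 'n) set" where
  "Im P = snd ` P"

definition Indef :: "((complex ^ 'n) \<times> (complex ^ 'n)) set \<Rightarrow> (complex ^ 'n) set" where
  "Indef P = {w. (0, w) \<in> P}"

text \<open>rk P = dim Dom P - dim Ker P (Ker P \<subseteq> Dom P, so no truncation occurs)\<close>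
definition rk :: "((complex ^ 'n) \<times> (complex ^ 'n)) set \<Rightarrow> nat" where
  "rk P = cdimV (Dom P) - cdimV (Ker P)"

text \<open>A hinge (P_1,...,P_k), k \<ge> 1, as a list (0-based indices).\<close>
definition is_hinge :: "((complex ^ 'n) \<times> (complex ^ 'n)) set list \<Rightarrow> bool" where
  "is_hinge Ps \<longleftrightarrow> Ps \<noteq> [] \<and>
     (\<forall>P\<in>set Ps. csub2 P \<and> cdim2 P = CARD('n)) \<and>
     (\<forall>j. j + 1 < length Ps \<longrightarrow>
          Ker (Ps ! j) = Dom (Ps ! (j + 1)) \<and> Im (Ps ! j) = Indef (Ps ! (j + 1))) \<and>
     Dom (hd Ps) = UNIV \<and> Im (last Ps) = UNIV \<and>
     (\<forall>P\<in>set Ps. rk P > 0)"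

definition graph :: "complex ^ 'n ^ 'n \<Rightarrow> ((complex ^ 'n) \<times> (complex ^ 'n)) set" where
  "graph A = {(v, A *v v) | v. True}"

text \<open>Convergence in the Grassmannian Gr_n: the orthogonal projections onto the
  subspaces converge (standard embedding of Gr_n into the space of projections).
  The real inner product on V\<oplus>V is the real part of the Hermitian one, so for
  complex subspaces the nearest-point map is the Hermitian orthogonal projection.\<close>
definition gr_tendsto ::
  "(nat \<Rightarrow> ((complex ^ 'n) \<times> (complex ^ 'n)) set) \<Rightarrow> ((complex ^ 'n) \<times> (complex ^ 'n)) set \<Rightarrow> bool" where
  "gr_tendsto Q P \<longleftrightarrow> (\<forall>x. (\<lambda>j. closest_point (Q j) x) \<longlonglongrightarrow> closest_point P x)"

end

(*
  Take singular value decompositions g_j w_(j,i) = d_(j,i) u_(j,i) with orthonormal frames w_j,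
  u_j. By compactness, along a subsequence the frames converge to W, U and every ratio
  d_(j,a) / (d_(j,a) + d_(j,b)) converges. These limits sort the indices into levels: within a
  level the singular values stay comparable, and each level dominates all later ones. Rescaling
  g_j by the inverse of a singular value of level c, the directions of earlier levels blow up and
  survive only through their images, those of later levels die, and those of level c keep finite
  nonzero ratios lambda_i. So the graphs converge to the subspace P_c spanned by (0, U_i) for i
  of earlier levels, (W_i, 0) for later levels and (W_i, lambda_i U_i) for level c. Consecutive
  P_c form a hinge: Ker P_c and Dom P_(c+1) are both spanned by the W_i of levels after c, and
  Im P_c and Indef P_(c+1) by the U_i of levels up to c. Convergence in the Grassmannian, tested
  on orthogonal projections, holds because every point of P_c is a limit of points on the graphs
  and all these subspaces have the same dimension.
*)

theory Submission
  imports Defs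
begin

section \<open>Orthogonal projections onto converging subspaces\<close>

lemma closest_point_subspace_orthogonal:
  fixes S :: "'a::euclidean_space set"
  assumes S: "subspace S"
  shows "closest_point S x \<in> S" and "s \<in> S \<Longrightarrow> inner (x - closest_point S x) s = 0"
proof -
  have cl: "closed S" and cv: "convex S" and ne: "S \<noteq> {}"
    using S subspace_0[OF S] by (auto simp: closed_subspace subspace_imp_convex)
  let ?p = "closest_point S x"
  show pS: "?p \<in> S" using closest_point_in_set[OF cl ne] .
  assume "s \<in> S"
  then have "?p + s \<in> S" "?p - s \<in> S" using S pS by (auto simp: subspace_add subspace_diff)
  then have "inner (x - ?p) ((?p + s) - ?p) \<le> 0" "inner (x - ?p) ((?p - s) - ?p) \<le> 0"
    using closest_point_dot[OF cv cl] by blast+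
  then show "inner (x - ?p) s = 0" by (simp add: inner_diff_right)
qed

lemma closest_point_subspace_unique:
  fixes S :: "'a::euclidean_space set"
  assumes S: "subspace S" and pS: "p \<in> S" and orth: "\<And>s. s \<in> S \<Longrightarrow> inner (x - p) s = 0"
  shows "closest_point S x = p"
proof -
  have "dist x p \<le> dist x z" if "z \<in> S" for z
  proof -
    have "inner (x - p) (p - z) = 0" using orth S pS that by (simp add: subspace_diff)
    then have "(norm (x - z))\<^sup>2 = (norm (x - p))\<^sup>2 + (norm (p - z))\<^sup>2"
      using norm_add_Pythagorean[of "x - p" "p - z"] by (simp add: orthogonal_def)
    then have "(norm (x - p))\<^sup>2 \<le> (norm (x - z))\<^sup>2" by simp
    then show ?thesis unfolding dist_norm by (rule power2_le_imp_le) simp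
  qed
  then show ?thesis
    using closest_point_unique[OF subspace_imp_convex[OF S] closed_subspace[OF S] pS] by metis
qed

lemma linear_closest_point_subspace:
  fixes S :: "'a::euclidean_space set"
  assumes S: "subspace S"
  shows "linear (closest_point S)"
proof -
  note cp = closest_point_subspace_orthogonal[OF S]
  show ?thesis
  proof
    fix x y
    show "closest_point S (x + y) = closest_point S x + closest_point S y"
    proof (rule closest_point_subspace_unique[OF S])
      show "closest_point S x + closest_point S y \<in> S" using cp(1) S subspace_add by blast
      fix s assume "s \<in> S"
      then show "inner (x + y - (closest_point S x + closest_point S y)) s = 0"
        using cp(2)[of s x] cp(2)[of s y] by (simp add: algebra_simps inner_diff_left inner_add_left)
    qed
  next
    fix c x
    show "closest_point S (c *\<^sub>R x) = c *\<^sub>R closest_point S x"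
    proof (rule closest_point_subspace_unique[OF S])
      show "c *\<^sub>R closest_point S x \<in> S" using cp(1) S subspace_scale by blast
      fix s assume "s \<in> S"
      then show "inner (c *\<^sub>R x - c *\<^sub>R closest_point S x) s = 0"
        using cp(2)[of s x] by (simp flip: scaleR_diff_right)
    qed
  qed
qed

lemma closest_point_tendsto_self_if_approx:
  fixes Q :: "nat \<Rightarrow> 'a::euclidean_space set"
  assumes Q: "\<And>j. subspace (Q j)" and q: "\<And>j. q j \<in> Q j" and lim: "q \<longlonglongrightarrow> p"
  shows "(\<lambda>j. closest_point (Q j) p) \<longlonglongrightarrow> p"
proof -
  have le: "norm (closest_point (Q j) p - p) \<le> norm (q j - p)" for j
    using closest_point_le[OF closed_subspace[OF Q] q, of p]
    by (simp add: dist_norm norm_minus_commute)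
  have "(\<lambda>j. q j - p) \<longlonglongrightarrow> 0" using lim by (rule LIM_zero)
  then have "(\<lambda>j. norm (q j - p)) \<longlonglongrightarrow> 0" by (rule tendsto_norm_zero)
  then have "(\<lambda>j. closest_point (Q j) p - p) \<longlonglongrightarrow> 0"
    by (rule Lim_null_comparison[rotated]) (simp add: le)
  then show ?thesis by (rule LIM_zero_cancel)
qed

lemma linear_tendsto_id_on_subspace_uniform:
  fixes \<pi> :: "nat \<Rightarrow> 'a::euclidean_space \<Rightarrow> 'a"
  assumes P: "subspace P" and lin: "\<And>j. linear (\<pi> j)"
    and conv: "\<And>p. p \<in> P \<Longrightarrow> (\<lambda>j. \<pi> j p) \<longlonglongrightarrow> p"
  obtains \<delta> where "\<delta> \<longlonglongrightarrow> 0" and "\<And>j. 0 \<le> \<delta> j"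
    and "\<And>j p. p \<in> P \<Longrightarrow> norm (\<pi> j p - p) \<le> \<delta> j * norm p"
proof -
  obtain B where B: "B \<subseteq> P" "pairwise orthogonal B" "\<And>x. x \<in> B \<Longrightarrow> norm x = 1"
      "independent B" "span B = P"
    using orthonormal_basis_subspace[OF P] by metis
  have finB: "finite B" using B(4) by (simp add: independent_imp_finite)
  define \<delta> where "\<delta> j = (\<Sum>b\<in>B. norm (\<pi> j b - b))" for j
  show thesis
  proof
    have "(\<lambda>j. norm (\<pi> j b - b)) \<longlonglongrightarrow> 0" if "b \<in> B" for b
      using conv[THEN LIM_zero, THEN tendsto_norm_zero] B(1) that by blast
    then have "(\<lambda>j. \<Sum>b\<in>B. norm (\<pi> j b - b)) \<longlonglongrightarrow> (\<Sum>b\<in>B. 0)"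
      by (intro tendsto_sum)
    then show "\<delta> \<longlonglongrightarrow> 0" by (simp add: \<delta>_def[abs_def])
    show "0 \<le> \<delta> j" for j unfolding \<delta>_def by (simp add: sum_nonneg)
    fix j p assume "p \<in> P"
    then have p: "p = (\<Sum>b\<in>B. inner p b *\<^sub>R b)"
      using orthonormal_basis_expand[OF B(2,3) _ finB] B(5) by metis
    have "\<pi> j p - p = (\<Sum>b\<in>B. inner p b *\<^sub>R (\<pi> j b - b))"
      by (subst (1 2) p) (simp add: linear_sum[OF lin] linear_scale[OF lin] scaleR_diff_right sum_subtractf)
    also have "norm \<dots> \<le> (\<Sum>b\<in>B. norm (inner p b *\<^sub>R (\<pi> j b - b)))" by (rule norm_sum)
    also have "\<dots> \<le> (\<Sum>b\<in>B. norm p * norm (\<pi> j b - b))"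
    proof (rule sum_mono)
      fix b assume "b \<in> B"
      then have "\<bar>inner p b\<bar> \<le> norm p" using Cauchy_Schwarz_ineq2[of p b] B(3) by simp
      then show "norm (inner p b *\<^sub>R (\<pi> j b - b)) \<le> norm p * norm (\<pi> j b - b)"
        by (simp add: mult_right_mono)
    qed
    also have "\<dots> = \<delta> j * norm p" by (simp add: \<delta>_def sum_distrib_left mult.commute)
    finally show "norm (\<pi> j p - p) \<le> \<delta> j * norm p" .
  qed
qed

lemma closest_point_image_subspace_eq:
  fixes P Q :: "'a::euclidean_space set"
  assumes P: "subspace P" and Q: "subspace Q" and dim: "dim Q = dim P" and \<delta>: "\<delta> < 1"
    and near: "\<And>p. p \<in> P \<Longrightarrow> norm (closest_point Q p - p) \<le> \<delta> * norm p"
  shows "closest_point Q ` P = Q"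
proof -
  note lin = linear_closest_point_subspace[OF Q]
  have "inj_on (closest_point Q) (span P)"
  proof (rule linear_inj_on_iff_eq_0[OF lin subspace_span, THEN iffD2], intro ballI impI)
    fix p assume "p \<in> span P" and "closest_point Q p = 0"
    then have "norm p \<le> \<delta> * norm p" using near[of p] P by (simp add: span_eq_iff[THEN iffD2])
    then have "(1 - \<delta>) * norm p \<le> 0" by (simp add: algebra_simps)
    then show "p = 0" using \<delta> by (simp add: mult_le_0_iff)
  qed
  then have "dim (closest_point Q ` P) = dim Q" using dim by (simp add: dim_image_eq[OF lin])
  moreover have "closest_point Q ` P \<subseteq> Q" using closest_point_subspace_orthogonal(1)[OF Q] by blast
  ultimately show ?thesis by (intro subspace_dim_equal linear_subspace_image[OF lin P] Q) simp_all
qed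

lemma norm_closest_point_of_orthogonal_le:
  fixes P Q :: "'a::euclidean_space set"
  assumes P: "subspace P" and Q: "subspace Q" and dim: "dim Q = dim P"
    and \<delta>: "0 \<le> \<delta>" "\<delta> < 1/2"
    and near: "\<And>p. p \<in> P \<Longrightarrow> norm (closest_point Q p - p) \<le> \<delta> * norm p"
    and orth: "\<And>p. p \<in> P \<Longrightarrow> inner y p = 0"
  shows "norm (closest_point Q y) \<le> 2 * \<delta> * norm y"
proof -
  let ?\<pi> = "closest_point Q"
  have "?\<pi> y \<in> ?\<pi> ` P"
    using closest_point_image_subspace_eq[OF P Q dim _ near] closest_point_subspace_orthogonal(1)[OF Q] \<delta>
    by simp
  then obtain p where pP: "p \<in> P" and pe: "?\<pi> y = ?\<pi> p" by blast
  have "inner (y - ?\<pi> y) (?\<pi> y) = 0"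
    using closest_point_subspace_orthogonal[OF Q] by blast
  then have "(norm (?\<pi> y))\<^sup>2 = inner (?\<pi> p - p) y"
    using orth[OF pP] pe by (simp add: power2_norm_eq_inner inner_diff_left inner_diff_right inner_commute)
  also have "\<dots> \<le> \<delta> * norm p * norm y"
    using norm_cauchy_schwarz[of "?\<pi> p - p" y] mult_right_mono[OF near[OF pP] norm_ge_zero[of y]]
    by (simp add: inner_commute)
  also have "\<dots> \<le> \<delta> * (2 * norm (?\<pi> y)) * norm y"
  proof -
    have "norm p \<le> norm (?\<pi> p) + \<delta> * norm p"
      using norm_triangle_ineq4[of "?\<pi> p" "?\<pi> p - p"] near[OF pP] by simp
    moreover have "\<delta> * norm p \<le> norm p / 2" using mult_right_mono[of \<delta> "1/2" "norm p"] \<delta> by simp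
    ultimately have "norm p \<le> 2 * norm (?\<pi> y)" unfolding pe by linarith
    then show ?thesis using \<delta> by (simp add: mult_left_mono mult_right_mono)
  qed
  finally have "norm (?\<pi> y) * norm (?\<pi> y) \<le> norm (?\<pi> y) * (2 * \<delta> * norm y)"
    by (simp add: power2_eq_square algebra_simps)
  then show ?thesis
    using \<delta> by (cases "?\<pi> y = 0") (auto simp: mult_le_cancel_left)
qed

lemma closest_point_tendsto_if_approx:
  fixes Q :: "nat \<Rightarrow> 'a::euclidean_space set"
  assumes P: "subspace P" and Q: "\<And>j. subspace (Q j)" and dim: "\<And>j. dim (Q j) = dim P"
    and approx: "\<And>p. p \<in> P \<Longrightarrow> \<exists>q. (\<forall>j. q j \<in> Q j) \<and> q \<longlonglongrightarrow> p"
  shows "(\<lambda>j. closest_point (Q j) x) \<longlonglongrightarrow> closest_point P x"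
proof -
  have conv: "(\<lambda>j. closest_point (Q j) p) \<longlonglongrightarrow> p" if pP: "p \<in> P" for p
  proof -
    obtain q where "\<And>j. q j \<in> Q j" "q \<longlonglongrightarrow> p" using approx[OF pP] by blast
    then show ?thesis by (rule closest_point_tendsto_self_if_approx[OF Q])
  qed
  obtain \<delta> where \<delta>: "\<delta> \<longlonglongrightarrow> 0" "\<And>j. 0 \<le> \<delta> j"
    and near: "\<And>j p. p \<in> P \<Longrightarrow> norm (closest_point (Q j) p - p) \<le> \<delta> j * norm p"
    using linear_tendsto_id_on_subspace_uniform[OF P linear_closest_point_subspace[OF Q] conv] by blast
  define y where "y = x - closest_point P x"
  have "(\<lambda>j. closest_point (Q j) y) \<longlonglongrightarrow> 0"
  proof (rule Lim_null_comparison)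
    have "eventually (\<lambda>j. \<delta> j < 1/2) sequentially"
      using \<delta>(1) by (rule order_tendstoD) simp
    then show "eventually (\<lambda>j. norm (closest_point (Q j) y) \<le> 2 * \<delta> j * norm y) sequentially"
    proof eventually_elim
      case (elim j)
      show ?case
        using closest_point_subspace_orthogonal(2)[OF P] \<delta>(2) elim
        by (intro norm_closest_point_of_orthogonal_le[OF P Q dim _ _ near]) (auto simp: y_def)
    qed
    show "(\<lambda>j. 2 * \<delta> j * norm y) \<longlonglongrightarrow> 0"
      by (intro tendsto_mult_right_zero tendsto_mult_left_zero \<delta>(1))
  qed
  moreover have "(\<lambda>j. closest_point (Q j) (closest_point P x)) \<longlonglongrightarrow> closest_point P x"
    using conv closest_point_subspace_orthogonal(1)[OF P] by blast
  ultimately have "(\<lambda>j. closest_point (Q j) (closest_point P x) + closest_point (Q j) y)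
      \<longlonglongrightarrow> closest_point P x + 0"
    by (intro tendsto_add)
  moreover have "closest_point (Q j) (closest_point P x) + closest_point (Q j) y = closest_point (Q j) x" for j
    using linear_closest_point_subspace[OF Q] by (simp add: y_def linear_diff)
  ultimately show ?thesis by simp
qed

section \<open>The Hermitian inner product\<close>

definition cinner :: "complex ^ 'n \<Rightarrow> complex ^ 'n \<Rightarrow> complex" where
  "cinner x y = (\<Sum>i\<in>UNIV. x $ i * cnj (y $ i))"

lemma cinner_add_left: "cinner (x + y) z = cinner x z + cinner y z"
  by (simp add: cinner_def distrib_right sum.distrib)

lemma cinner_add_right: "cinner x (y + z) = cinner x y + cinner x z"
  by (simp add: cinner_def distrib_left sum.distrib)

lemma cinner_scale_left: "cinner (c *s x) y = c * cinner x y"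
  by (simp add: cinner_def sum_distrib_left mult.assoc)

lemma cinner_scale_right: "cinner x (c *s y) = cnj c * cinner x y"
  by (simp add: cinner_def sum_distrib_left algebra_simps)

lemma cinner_commute: "cinner y x = cnj (cinner x y)"
  by (simp add: cinner_def mult.commute)

lemma cinner_zero_left [simp]: "cinner 0 y = 0"
  by (simp add: cinner_def)

lemma cinner_sum_left: "cinner (\<Sum>k\<in>K. f k) y = (\<Sum>k\<in>K. cinner (f k) y)"
  by (induction K rule: infinite_finite_induct) (auto simp: cinner_add_left)

lemma Re_cinner: "Re (cinner x y) = inner x y"
  by (simp add: cinner_def inner_vec_def inner_complex_def Re_sum)

lemma cinner_self: "cinner x x = complex_of_real ((norm x)\<^sup>2)"
proof -
  have "cinner x x = (\<Sum>i\<in>UNIV. complex_of_real ((cmod (x $ i))\<^sup>2))"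
    unfolding cinner_def complex_norm_square ..
  also have "\<dots> = complex_of_real ((norm x)\<^sup>2)"
    by (simp add: norm_vec_def L2_set_def sum_nonneg)
  finally show ?thesis .
qed

lemma cinner_eq_zero_iff_orthogonal:
  "cinner x y = 0 \<longleftrightarrow> orthogonal x y \<and> orthogonal x (\<i> *s y)"
proof -
  have "inner x (\<i> *s y) = complex.Im (cinner x y)"
    using Re_cinner[of x "\<i> *s y"] by (simp add: cinner_scale_right)
  then show ?thesis using Re_cinner[of x y] by (simp add: complex_eq_iff orthogonal_def)
qed

lemma tendsto_cinner [tendsto_intros]:
  assumes "(f \<longlongrightarrow> a) F" "(g \<longlongrightarrow> b) F"
  shows "((\<lambda>x. cinner (f x) (g x)) \<longlongrightarrow> cinner a b) F"
  unfolding cinner_def using assms by (intro tendsto_intros)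

lemma norm_cscale: "norm (c *s (x :: complex ^ 'n)) = cmod c * norm x"
proof -
  have "norm (c *s x) = L2_set (\<lambda>i. cmod c * norm (x $ i)) UNIV"
    by (simp add: norm_vec_def norm_mult)
  also have "\<dots> = cmod c * norm x" by (simp add: norm_vec_def L2_set_right_distrib)
  finally show ?thesis .
qed

lemma norm_add_cscale_power2:
  "(norm (x + t *s y))\<^sup>2 = (norm x)\<^sup>2 + 2 * Re (cnj t * cinner x y) + (cmod t)\<^sup>2 * (norm y)\<^sup>2"
proof -
  let ?z = "cnj t * cinner x y"
  have "complex_of_real ((norm (x + t *s y))\<^sup>2)
      = complex_of_real ((norm x)\<^sup>2) + (?z + cnj ?z)
        + complex_of_real ((cmod t)\<^sup>2) * complex_of_real ((norm y)\<^sup>2)"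
    unfolding cinner_self[symmetric] complex_norm_square
    by (simp add: cinner_add_left cinner_add_right cinner_scale_left cinner_scale_right
        cinner_commute[of x y] algebra_simps)
  also have "\<dots> = complex_of_real ((norm x)\<^sup>2 + 2 * Re ?z + (cmod t)\<^sup>2 * (norm y)\<^sup>2)"
    by (simp only: complex_add_cnj of_real_add of_real_mult)
  finally show ?thesis by (simp only: of_real_eq_iff)
qed

definition orthonormal_rows :: "complex ^ 'n ^ 'm \<Rightarrow> bool" where
  "orthonormal_rows w \<longleftrightarrow> (\<forall>i l. cinner (w $ i) (w $ l) = (if i = l then 1 else 0))"

lemma orthonormal_rows_limit:
  assumes lim: "w \<longlonglongrightarrow> W" and orth: "\<And>j. orthonormal_rows (w j)"
  shows "orthonormal_rows W"
  unfolding orthonormal_rows_def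
proof (intro allI)
  fix i l
  have "(\<lambda>j. cinner (w j $ i) (w j $ l)) \<longlonglongrightarrow> cinner (W $ i) (W $ l)"
    by (intro tendsto_intros lim)
  moreover have "cinner (w j $ i) (w j $ l) = (if i = l then 1 else 0)" for j
    using orth[of j] by (simp add: orthonormal_rows_def)
  ultimately have "(\<lambda>j. if i = l then 1 else 0) \<longlonglongrightarrow> cinner (W $ i) (W $ l)"
    by simp
  then show "cinner (W $ i) (W $ l) = (if i = l then 1 else 0)"
    by (rule LIMSEQ_unique[OF tendsto_const, symmetric])
qed

lemma norm_le_card_if_orthonormal_rows:
  assumes "orthonormal_rows (w :: complex ^ 'n ^ 'm)"
  shows "norm w \<le> real CARD('m)"
proof -
  have "norm (w $ i) = 1" for i
  proof -
    have "cinner (w $ i) (w $ i) = 1" using assms by (simp add: orthonormal_rows_def)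
    then have "(norm (w $ i))\<^sup>2 = 1" by (simp only: cinner_self of_real_eq_1_iff)
    then show ?thesis using norm_ge_zero[of "w $ i"] by (auto simp: power2_eq_1_iff)
  qed
  moreover have "norm w \<le> (\<Sum>i\<in>UNIV. norm (w $ i))"
    unfolding norm_vec_def by (rule L2_set_le_sum) simp
  ultimately show ?thesis by simp
qed

section \<open>Singular value decomposition\<close>

definition cperp :: "(complex ^ 'n) set \<Rightarrow> (complex ^ 'n) set" where
  "cperp B = {v. \<forall>b\<in>B. cinner v b = 0}"

lemma cperp_add_scale: "x \<in> cperp B \<Longrightarrow> y \<in> cperp B \<Longrightarrow> x + c *s y \<in> cperp B"
  by (simp add: cperp_def cinner_add_left cinner_scale_left)

lemma closed_cperp: "closed (cperp B)"
proof -
  have "cperp B = (\<Inter>b\<in>B. {v. cinner v b = 0})" by (auto simp: cperp_def)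
  moreover have "closed {v. cinner v b = 0}" for b
    by (intro closed_Collect_eq continuous_intros) (simp_all add: cinner_def continuous_intros)
  ultimately show ?thesis by auto
qed

lemma cperp_contains_unit_vector:
  fixes B :: "(complex ^ 'n) set"
  assumes fin: "finite B" and card: "card B < CARD('n)"
  obtains v where "v \<in> cperp B" and "norm v = 1"
proof -
  let ?T = "B \<union> (\<lambda>b. \<i> *s b) ` B"
  have "card ?T \<le> card B + card B"
    using card_Un_le[of B "(\<lambda>b. \<i> *s b) ` B"] card_image_le[OF fin, of "\<lambda>b. \<i> *s b"] by linarith
  then have "dim ?T < DIM(complex ^ 'n)"
    using dim_le_card'[of ?T] fin card by (simp add: DIM_cart)
  then obtain x :: "complex ^ 'n" where x: "x \<noteq> 0" "\<And>y. y \<in> span ?T \<Longrightarrow> orthogonal x y"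
    using orthogonal_to_subspace_exists by metis
  have "x \<in> cperp B"
    using x(2) by (auto simp: cperp_def cinner_eq_zero_iff_orthogonal intro: span_base)
  then have "complex_of_real (1 / norm x) *s x \<in> cperp B"
    using cperp_add_scale[of 0 B] by (simp add: cperp_def)
  moreover have "norm (complex_of_real (1 / norm x) *s x) = 1"
    using x(1) by (simp add: norm_cscale norm_divide)
  ultimately show ?thesis by (rule that)
qed

text \<open>Moving \<open>v\<^sub>0\<close> by \<open>\<epsilon> \<langle>g v\<^sub>0, g u\<rangle> u\<close> for small real \<open>\<epsilon> > 0\<close> would increase
  the quotient \<open>\<parallel>g v\<parallel> / \<parallel>v\<parallel>\<close> to first order.\<close>
lemma cinner_image_eq_0_if_maximiser:
  fixes g :: "complex ^ 'n ^ 'm"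
  assumes v0: "norm v0 = 1" and u: "cinner v0 u = 0"
    and max: "\<And>t. norm (g *v (v0 + t *s u)) \<le> norm (g *v v0) * norm (v0 + t *s u)"
  shows "cinner (g *v v0) (g *v u) = 0"
proof (rule ccontr)
  define a where "a = cinner (g *v v0) (g *v u)"
  define M where "M = norm (g *v v0)"
  define X where "X = M\<^sup>2 * (norm u)\<^sup>2"
  define \<epsilon> where "\<epsilon> = 1 / (X + 1)"
  define t where "t = complex_of_real \<epsilon> * a"
  assume "cinner (g *v v0) (g *v u) \<noteq> 0"
  then have a: "(cmod a)\<^sup>2 > 0" by (simp add: a_def)
  have "0 \<le> X" by (simp add: X_def)
  then have \<epsilon>: "\<epsilon> > 0" "\<epsilon> * X < 1" by (simp_all add: \<epsilon>_def field_simps)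
  have "cnj t * a = complex_of_real (\<epsilon> * (cmod a)\<^sup>2)"
    unfolding t_def of_real_mult complex_norm_square by (simp add: algebra_simps)
  then have ta: "Re (cnj t * a) = \<epsilon> * (cmod a)\<^sup>2" by simp
  have t2: "(cmod t)\<^sup>2 = \<epsilon>\<^sup>2 * (cmod a)\<^sup>2"
    using \<epsilon>(1) by (simp add: t_def norm_mult power_mult_distrib)
  have "g *v (v0 + t *s u) = g *v v0 + t *s (g *v u)"
    by (simp add: matrix_vector_right_distrib vector_scalar_commute)
  then have "M\<^sup>2 + 2 * (\<epsilon> * (cmod a)\<^sup>2) \<le> (norm (g *v (v0 + t *s u)))\<^sup>2"
    using ta by (simp add: norm_add_cscale_power2 a_def M_def)
  also have "\<dots> \<le> M\<^sup>2 * (norm (v0 + t *s u))\<^sup>2"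
    using max[of t] by (simp add: M_def power_mono flip: power_mult_distrib)
  also have "\<dots> = M\<^sup>2 + (\<epsilon> * X) * (\<epsilon> * (cmod a)\<^sup>2)"
    unfolding norm_add_cscale_power2 using u v0 t2 by (simp add: X_def algebra_simps power2_eq_square)
  finally have "2 * (\<epsilon> * (cmod a)\<^sup>2) \<le> (\<epsilon> * X) * (\<epsilon> * (cmod a)\<^sup>2)"
    by simp
  moreover have "(\<epsilon> * X) * (\<epsilon> * (cmod a)\<^sup>2) < 1 * (\<epsilon> * (cmod a)\<^sup>2)"
    using \<epsilon> a by (intro mult_strict_right_mono) simp_all
  ultimately show False using \<epsilon> a by simp
qed

definition partial_svd :: "complex ^ 'n ^ 'm \<Rightarrow> (complex ^ 'n) set \<Rightarrow> bool" where
  "partial_svd g B \<longleftrightarrow> finite B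
     \<and> (\<forall>b\<in>B. \<forall>c\<in>B. cinner b c = (if b = c then 1 else 0))
     \<and> (\<forall>b\<in>B. \<forall>c\<in>B. b \<noteq> c \<longrightarrow> cinner (g *v b) (g *v c) = 0)
     \<and> (\<forall>b\<in>B. \<forall>v\<in>cperp B. cinner (g *v b) (g *v v) = 0)"

lemma norm_image_le_if_max_on_sphere:
  fixes g :: "complex ^ 'n ^ 'm"
  assumes max: "\<And>y. y \<in> cperp B \<Longrightarrow> norm y = 1 \<Longrightarrow> norm (g *v y) \<le> M" and v: "v \<in> cperp B"
  shows "norm (g *v v) \<le> M * norm v"
proof (cases "v = 0")
  case False
  define y where "y = complex_of_real (1 / norm v) *s v"
  have "y \<in> cperp B" using cperp_add_scale[OF _ v, of 0] by (simp add: y_def cperp_def)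
  moreover have "norm y = 1" using False by (simp add: y_def norm_cscale norm_divide)
  ultimately have "norm (g *v y) \<le> M" by (rule max)
  moreover have "norm (g *v y) = norm (g *v v) / norm v"
    by (simp add: y_def vector_scalar_commute norm_cscale norm_divide)
  ultimately show ?thesis using False by (simp add: field_simps)
qed simp

lemma partial_svd_extend:
  fixes g :: "complex ^ 'n ^ 'm"
  assumes svd: "partial_svd g B" and card: "card B < CARD('n)"
  obtains v where "v \<notin> B" and "partial_svd g (insert v B)"
proof -
  have fin: "finite B" using svd by (simp add: partial_svd_def)
  define K where "K = sphere 0 1 \<inter> cperp B"
  obtain v where "v \<in> cperp B" "norm v = 1"
    using cperp_contains_unit_vector[OF fin card] .
  then have "K \<noteq> {}" by (auto simp: K_def)
  moreover have "compact K" unfolding K_def by (intro compact_Int_closed compact_sphere closed_cperp)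
  moreover have "continuous_on K (\<lambda>y. norm (g *v y))"
    by (intro continuous_on_norm linear_continuous_on matrix_vector_mul_bounded_linear)
  ultimately obtain v0 where "v0 \<in> K" and max: "\<And>y. y \<in> K \<Longrightarrow> norm (g *v y) \<le> norm (g *v v0)"
    using continuous_attains_sup[of K "\<lambda>y. norm (g *v y)"] by auto
  then have v0: "v0 \<in> cperp B" "norm v0 = 1" by (auto simp: K_def)
  then have v0v0: "cinner v0 v0 = 1" by (simp add: cinner_self)
  have v0_orth: "cinner v0 b = 0" "cinner b v0 = 0" if "b \<in> B" for b
    using v0(1) that cinner_commute[of b v0] by (auto simp: cperp_def)
  have max_image: "cinner (g *v v0) (g *v v) = 0" if "v \<in> cperp (insert v0 B)" for v
  proof (rule cinner_image_eq_0_if_maximiser[OF v0(2)])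
    show "cinner v0 v = 0" using that cinner_commute[of v v0] by (simp add: cperp_def)
    fix t
    have "v0 + t *s v \<in> cperp B" using that v0(1) by (intro cperp_add_scale) (auto simp: cperp_def)
    then show "norm (g *v (v0 + t *s v)) \<le> norm (g *v v0) * norm (v0 + t *s v)"
      by (rule norm_image_le_if_max_on_sphere[rotated]) (simp add: max K_def)
  qed
  show ?thesis
  proof
    show "v0 \<notin> B" using v0_orth(1) v0v0 by auto
    have "cinner (g *v b) (g *v v0) = 0" if "b \<in> B" for b
      using svd v0(1) that by (simp add: partial_svd_def)
    moreover from this have "cinner (g *v v0) (g *v b) = 0" if "b \<in> B" for b
      using that cinner_commute[of "g *v b" "g *v v0"] by simp
    moreover have "cperp (insert v0 B) \<subseteq> cperp B" by (auto simp: cperp_def)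
    ultimately show "partial_svd g (insert v0 B)"
      using svd v0v0 v0_orth max_image unfolding partial_svd_def by auto
  qed
qed

lemma partial_svd_exists:
  fixes g :: "complex ^ 'n ^ 'm"
  shows "k \<le> CARD('n) \<Longrightarrow> \<exists>B. partial_svd g B \<and> card B = k"
proof (induction k)
  case 0
  have "partial_svd g {}" by (simp add: partial_svd_def)
  then show ?case by force
next
  case (Suc k)
  then obtain B where B: "partial_svd g B" "card B = k" by auto
  have "card B < CARD('n)" using B(2) Suc.prems by simp
  then obtain v where "v \<notin> B" "partial_svd g (insert v B)"
    by (rule partial_svd_extend[OF B(1)])
  moreover have "finite B" using B(1) by (simp add: partial_svd_def)
  ultimately show ?case using B(2) by (intro exI[of _ "insert v B"]) simp
qed

lemma singular_value_decomposition:
  fixes g :: "complex ^ 'n ^ 'n"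
  assumes inv: "invertible g"
  obtains w u :: "complex ^ 'n ^ 'n" and d :: "'n \<Rightarrow> real"
  where "orthonormal_rows w" and "orthonormal_rows u" and "\<And>i. 0 < d i"
    and "\<And>i. g *v (w $ i) = complex_of_real (d i) *s (u $ i)"
proof -
  obtain B where B: "partial_svd g B" "card B = CARD('n)"
    using partial_svd_exists[of "CARD('n)" g] by auto
  then obtain e where e: "bij_betw e (UNIV :: 'n set) B"
    using finite_same_card_bij[of "UNIV :: 'n set" B] by (auto simp: partial_svd_def)
  have eB: "e i \<in> B" and e_eq: "e i = e l \<longleftrightarrow> i = l" for i l
    using e by (auto simp: bij_betw_def inj_on_def)
  have ee: "cinner (e i) (e l) = (if i = l then 1 else 0)" for i l
    using B(1) eB e_eq by (simp add: partial_svd_def)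
  have gee: "cinner (g *v e i) (g *v e l) = 0" if "i \<noteq> l" for i l
    using B(1) eB e_eq that by (simp add: partial_svd_def)
  define d where "d i = norm (g *v e i)" for i
  have d: "0 < d i" for i
  proof -
    have "e i \<noteq> 0" using ee[of i i] by auto
    then show ?thesis
      using inv by (auto simp: d_def invertible_left_inverse matrix_left_invertible_ker)
  qed
  show ?thesis
  proof
    show "orthonormal_rows (\<chi> i. e i)" using ee by (simp add: orthonormal_rows_def)
    show "orthonormal_rows (\<chi> i. complex_of_real (1 / d i) *s (g *v e i))"
      using gee d by (simp add: orthonormal_rows_def cinner_scale_left cinner_scale_right cinner_self
          d_def power2_eq_square)
    show "g *v ((\<chi> i. e i) $ i) = complex_of_real (d i) *s ((\<chi> i. complex_of_real (1 / d i) *s (g *v e i)) $ i)"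
      for i using d[of i] by (simp add: vector_smult_assoc)
  qed (rule d)
qed

section \<open>Complex subspaces of \<open>V \<oplus> V\<close>\<close>

lemma vector_space_pscale: "vector_space (pscale :: complex \<Rightarrow> (complex ^ 'n) \<times> (complex ^ 'n) \<Rightarrow> _)"
  by unfold_locales (auto simp: pscale_def vec_eq_iff algebra_simps)

lemma csub2_iff:
  "csub2 P \<longleftrightarrow> 0 \<in> P \<and> (\<forall>x\<in>P. \<forall>y\<in>P. x + y \<in> P) \<and> (\<forall>c. \<forall>x\<in>P. pscale c x \<in> P)"
  unfolding csub2_def
  by (rule module.subspace_def[OF vector_space_pscale[unfolded module_iff_vector_space[symmetric]]])

lemma cdimV_eq_vec_dim:
  fixes S :: "(complex ^ 'n) set"
  shows "cdimV S = vec.dim S"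
proof -
  have "vscale = ((*s) :: complex \<Rightarrow> complex ^ 'n \<Rightarrow> _)" by (simp add: fun_eq_iff vscale_def)
  then show ?thesis by (simp only: cdimV_def)
qed

lemma scaleR_eq_of_real_cscale: "r *\<^sub>R (v :: complex ^ 'n) = complex_of_real r *s v"
proof (rule vec_eq_iff[THEN iffD2], rule allI)
  fix i
  have "(r *\<^sub>R v) $ i = r *\<^sub>R (v $ i)" by simp
  also have "\<dots> = complex_of_real r * v $ i" by (simp add: scaleR_conv_of_real)
  finally show "(r *\<^sub>R v) $ i = (complex_of_real r *s v) $ i" by simp
qed

lemma linear_pscale_pairI:
  fixes f1 f2 :: "complex ^ 'n \<Rightarrow> complex ^ 'n"
  assumes "Vector_Spaces.linear (*s) (*s) f1" and "Vector_Spaces.linear (*s) (*s) f2"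
  shows "Vector_Spaces.linear (*s) pscale (\<lambda>x. (f1 x, f2 x))"
  using assms vector_space_pscale unfolding Vector_Spaces.linear_iff by (simp add: pscale_def)

lemma range_injective_linear:
  fixes \<phi> :: "complex ^ 'n \<Rightarrow> (complex ^ 'n) \<times> (complex ^ 'n)"
  assumes lin: "Vector_Spaces.linear (*s) pscale \<phi>" and inj: "inj \<phi>"
  shows "csub2 (range \<phi>)" and "cdim2 (range \<phi>) = CARD('n)"
    and "subspace (range \<phi>)" and "dim (range \<phi>) = dim (UNIV :: (complex ^ 'n) set)"
proof -
  interpret \<phi>: Vector_Spaces.linear "(*s)" pscale \<phi> by (rule lin)
  interpret pair: finite_dimensional_vector_space_pair_1 "(*s)" cart_basis pscale
    by unfold_locales (auto simp: pscale_def vec_eq_iff algebra_simps)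
  show "csub2 (range \<phi>)" unfolding csub2_def by (rule \<phi>.subspace_image[OF vec.subspace_UNIV])
  have "inj_on \<phi> (vec.span UNIV)" unfolding vec.span_UNIV by (rule inj)
  then have "vector_space.dim pscale (range \<phi>) = vec.dim (UNIV :: (complex ^ 'n) set)"
    by (rule pair.dim_image_eq[OF lin])
  then show "cdim2 (range \<phi>) = CARD('n)" unfolding cdim2_def vec_dim_card .
  have rlin: "linear \<phi>"
  proof
    show "\<phi> (x + y) = \<phi> x + \<phi> y" for x y by (rule \<phi>.add)
    show "\<phi> (r *\<^sub>R x) = r *\<^sub>R \<phi> x" for r x
      using \<phi>.scale[of "complex_of_real r" x]
      by (simp add: scaleR_eq_of_real_cscale pscale_def scaleR_prod_def)
  qed
  show "subspace (range \<phi>)" by (rule linear_subspace_image[OF rlin subspace_UNIV])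
  show "dim (range \<phi>) = dim (UNIV :: (complex ^ 'n) set)"
  proof (rule dim_image_eq[OF rlin])
    show "inj_on \<phi> (span UNIV)" unfolding span_UNIV by (rule inj)
  qed
qed

lemma Ker_subset_Dom: "Ker P \<subseteq> Dom P"
proof
  fix v assume "v \<in> Ker P"
  then show "v \<in> Dom P" unfolding Ker_def Dom_def by (force intro: image_eqI[of v fst "(v, 0)"])
qed

lemma subspace_Ker_Dom:
  assumes P: "csub2 P"
  shows "vec.subspace (Ker P)" and "vec.subspace (Dom P)"
proof -
  note closed = P[unfolded csub2_iff]
  show "vec.subspace (Ker P)"
  proof (rule vec.subspaceI)
    show "0 \<in> Ker P" using closed by (simp add: Ker_def zero_prod_def[symmetric])
    show "x + y \<in> Ker P" if "x \<in> Ker P" "y \<in> Ker P" for x y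
    proof -
      have "(x, 0) + (y, 0) \<in> P" using closed that unfolding Ker_def by blast
      then show ?thesis by (simp add: Ker_def)
    qed
    show "c *s x \<in> Ker P" if "x \<in> Ker P" for c x
    proof -
      have "pscale c (x, 0) \<in> P" using closed that unfolding Ker_def by blast
      then show ?thesis by (simp add: Ker_def pscale_def)
    qed
  qed
  show "vec.subspace (Dom P)"
  proof (rule vec.subspaceI)
    show "0 \<in> Dom P" unfolding Dom_def using closed by (intro image_eqI[of 0 fst 0]) simp_all
    show "x + y \<in> Dom P" if xy: "x \<in> Dom P" "y \<in> Dom P" for x y
    proof -
      obtain p q where "p \<in> P" "q \<in> P" "x = fst p" "y = fst q" using xy unfolding Dom_def by blast
      then show ?thesis unfolding Dom_def using closed by (intro image_eqI[of _ fst "p + q"]) simp_all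
    qed
    show "c *s x \<in> Dom P" if x: "x \<in> Dom P" for c x
    proof -
      obtain p where "p \<in> P" "x = fst p" using x unfolding Dom_def by blast
      then show ?thesis
        unfolding Dom_def using closed by (intro image_eqI[of _ fst "pscale c p"]) (simp_all add: pscale_def)
    qed
  qed
qed

lemma rk_pos_if_Ker_ne_Dom:
  assumes P: "csub2 P" and ne: "Ker P \<noteq> Dom P"
  shows "0 < rk P"
proof -
  have spans: "vec.span (Ker P) = Ker P" "vec.span (Dom P) = Dom P"
    using subspace_Ker_Dom[OF P] by (simp_all only: vec.span_eq_iff)
  have "vec.span (Ker P) \<subset> vec.span (Dom P)"
    unfolding spans using Ker_subset_Dom[of P] ne by blast
  then show ?thesis
    using vec.dim_psubset by (simp add: rk_def cdimV_eq_vec_dim)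
qed

section \<open>Level subspaces and hinges\<close>

lemma vector_matrix_mult_eq_sum: "x v* W = (\<Sum>i\<in>UNIV. x $ i *s W $ i)"
  by (simp add: vec_eq_iff vector_matrix_mult_def sum_component mult.commute)

lemma linear_vector_matrix_mult: "Vector_Spaces.linear (*s) (*s) (\<lambda>x. x v* W)"
proof -
  have "(\<lambda>x. x v* W) = (*v) (transpose W)" by (simp add: fun_eq_iff)
  then show ?thesis by simp
qed

lemma tendsto_vector_matrix_mult [tendsto_intros]:
  fixes x :: "'a \<Rightarrow> complex ^ 'm" and W :: "'a \<Rightarrow> complex ^ 'n ^ 'm"
  assumes "(x \<longlongrightarrow> x0) F" and "(W \<longlongrightarrow> W0) F"
  shows "((\<lambda>j. x j v* W j) \<longlongrightarrow> x0 v* W0) F"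
  unfolding vector_matrix_mult_def
  by (intro vec_tendstoI) (simp add: assms tendsto_sum tendsto_mult tendsto_vec_nth)

lemma cinner_vector_matrix_mult_row:
  assumes "orthonormal_rows W"
  shows "cinner (x v* W) (W $ l) = x $ l"
proof -
  have "cinner (x v* W) (W $ l) = (\<Sum>i\<in>UNIV. if i = l then x $ i else 0)"
    using assms unfolding vector_matrix_mult_eq_sum cinner_sum_left
    by (intro sum.cong) (simp_all add: cinner_scale_left orthonormal_rows_def)
  then show ?thesis by simp
qed

lemma vector_matrix_mult_eq_0_iff:
  assumes "orthonormal_rows W"
  shows "x v* W = 0 \<longleftrightarrow> x = 0"
proof
  assume "x v* W = 0"
  then show "x = 0" using cinner_vector_matrix_mult_row[OF assms, of x] by (simp add: vec_eq_iff[of x])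
qed simp

lemma inj_vector_matrix_mult:
  assumes "orthonormal_rows W"
  shows "inj (\<lambda>x. x v* W)"
proof (rule injI)
  fix x y assume "x v* W = y v* W"
  then have "(x - y) v* W = 0" by (simp add: vector_matrix_mult_diff_distrib)
  then show "x = y" using vector_matrix_mult_eq_0_iff[OF assms] by simp
qed

definition rows_span :: "complex ^ 'n ^ 'm \<Rightarrow> 'm set \<Rightarrow> (complex ^ 'n) set" where
  "rows_span W S = {x v* W | x. \<forall>i. i \<notin> S \<longrightarrow> x $ i = 0}"

lemma row_in_rows_span_iff:
  assumes W: "orthonormal_rows W"
  shows "W $ m \<in> rows_span W S \<longleftrightarrow> m \<in> S"
proof
  assume "W $ m \<in> rows_span W S"
  then obtain x where x: "W $ m = x v* W" "\<forall>i. i \<notin> S \<longrightarrow> x $ i = 0"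
    by (auto simp: rows_span_def)
  have "x $ m = cinner (W $ m) (W $ m)" using cinner_vector_matrix_mult_row[OF W, of x m] x(1) by simp
  then have "x $ m = 1" using W by (simp add: orthonormal_rows_def)
  then show "m \<in> S" using x(2) by auto
next
  assume m: "m \<in> S"
  have "axis m 1 v* W = W $ m"
    unfolding vector_matrix_mult_eq_sum by (simp add: axis_def if_distrib[of "\<lambda>c. c *s _"] cong: if_cong)
  moreover have "\<forall>i. i \<notin> S \<longrightarrow> axis m 1 $ i = 0" using m by (simp add: axis_def)
  ultimately show "W $ m \<in> rows_span W S"
    unfolding rows_span_def by (intro CollectI exI[of _ "axis m 1"]) simp
qed

lemma rows_span_UNIV:
  assumes "orthonormal_rows (W :: complex ^ 'n ^ 'n)"
  shows "rows_span W UNIV = UNIV"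
proof -
  have "surj (\<lambda>x. x v* W)"
    by (rule vec.linear_inj_imp_surj[OF linear_vector_matrix_mult inj_vector_matrix_mult[OF assms]])
  then show ?thesis by (simp add: rows_span_def full_SetCompr_eq)
qed

lemma range_weighted_rows:
  "range (\<lambda>a. (\<chi> i. k i * a $ i) v* W) = rows_span W {i. k i \<noteq> 0}"
proof (intro equalityI subsetI)
  fix v assume "v \<in> range (\<lambda>a. (\<chi> i. k i * a $ i) v* W)"
  then show "v \<in> rows_span W {i. k i \<noteq> 0}" unfolding rows_span_def by auto
next
  fix v assume "v \<in> rows_span W {i. k i \<noteq> 0}"
  then obtain x where v: "v = x v* W" and x: "\<forall>i. k i = 0 \<longrightarrow> x $ i = 0"
    unfolding rows_span_def by auto
  have "(\<chi> i. k i * (x $ i / k i)) = x" using x by (simp add: vec_eq_iff)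
  then show "v \<in> range (\<lambda>a. (\<chi> i. k i * a $ i) v* W)"
    unfolding v by (intro range_eqI[where x="\<chi> i. x $ i / k i"]) simp
qed

definition dom_weight :: "('n \<Rightarrow> nat) \<Rightarrow> nat \<Rightarrow> 'n \<Rightarrow> complex" where
  "dom_weight f c i = (if c \<le> f i then 1 else 0)"

definition im_weight :: "('n \<Rightarrow> nat) \<Rightarrow> ('n \<Rightarrow> complex) \<Rightarrow> nat \<Rightarrow> 'n \<Rightarrow> complex" where
  "im_weight f \<mu> c i = (if f i < c then 1 else if f i = c then \<mu> i else 0)"

definition level_map :: "complex ^ 'n ^ 'n \<Rightarrow> complex ^ 'n ^ 'n \<Rightarrow> ('n \<Rightarrow> nat) \<Rightarrow> ('n \<Rightarrow> complex)
    \<Rightarrow> nat \<Rightarrow> complex ^ 'n \<Rightarrow> (complex ^ 'n) \<times> (complex ^ 'n)" where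
  "level_map W U f \<mu> c a =
     ((\<chi> i. dom_weight f c i * a $ i) v* W, (\<chi> i. im_weight f \<mu> c i * a $ i) v* U)"

definition level_space :: "complex ^ 'n ^ 'n \<Rightarrow> complex ^ 'n ^ 'n \<Rightarrow> ('n \<Rightarrow> nat) \<Rightarrow> ('n \<Rightarrow> complex)
    \<Rightarrow> nat \<Rightarrow> ((complex ^ 'n) \<times> (complex ^ 'n)) set" where
  "level_space W U f \<mu> c = range (level_map W U f \<mu> c)"

lemma vector_matrix_mult_weighted:
  fixes x :: "'a::comm_semiring_1 ^ 'm"
  shows "(\<chi> i. k i * x $ i) v* W = x v* (\<chi> i. k i *s W $ i)"
  by (simp add: vec_eq_iff vector_matrix_mult_def mult_ac)

lemma linear_level_map: "Vector_Spaces.linear (*s) pscale (level_map W U f \<mu> c)"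
  unfolding level_map_def vector_matrix_mult_weighted
  by (intro linear_pscale_pairI linear_vector_matrix_mult)

lemma inj_level_map:
  assumes W: "orthonormal_rows W" and U: "orthonormal_rows U"
  shows "inj (level_map W U f \<mu> c)"
proof -
  interpret L: Vector_Spaces.linear "(*s)" pscale "level_map W U f \<mu> c" by (rule linear_level_map)
  show ?thesis
  proof (rule L.inj_iff_eq_0[THEN iffD2], intro allI impI)
    fix a assume "level_map W U f \<mu> c a = 0"
    then have "(\<chi> i. dom_weight f c i * a $ i) = 0" "(\<chi> i. im_weight f \<mu> c i * a $ i) = 0"
      by (simp_all add: level_map_def zero_prod_def vector_matrix_mult_eq_0_iff[OF W]
          vector_matrix_mult_eq_0_iff[OF U])
    then show "a = 0"
      by (auto simp: vec_eq_iff dom_weight_def im_weight_def split: if_splits) (metis not_le)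
  qed
qed

lemma level_space_complex_dim:
  fixes W U :: "complex ^ 'n ^ 'n"
  assumes "orthonormal_rows W" and "orthonormal_rows U"
  shows "csub2 (level_space W U f \<mu> c)" and "cdim2 (level_space W U f \<mu> c) = CARD('n)"
  unfolding level_space_def
  using range_injective_linear[OF linear_level_map inj_level_map[OF assms]] by blast+

lemma level_space_real_dim:
  fixes W U :: "complex ^ 'n ^ 'n"
  assumes "orthonormal_rows W" and "orthonormal_rows U"
  shows "subspace (level_space W U f \<mu> c)"
    and "dim (level_space W U f \<mu> c) = dim (UNIV :: (complex ^ 'n) set)"
  unfolding level_space_def
  using range_injective_linear[OF linear_level_map inj_level_map[OF assms]] by blast+

lemma Dom_level_space: "Dom (level_space W U f \<mu> c) = rows_span W {i. c \<le> f i}"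
proof -
  have "Dom (level_space W U f \<mu> c) = range (\<lambda>a. (\<chi> i. dom_weight f c i * a $ i) v* W)"
    by (simp add: Dom_def level_space_def level_map_def image_image)
  also have "\<dots> = rows_span W {i. c \<le> f i}"
    by (simp add: range_weighted_rows dom_weight_def)
  finally show ?thesis .
qed

lemma Im_level_space:
  assumes "\<And>i. f i = c \<Longrightarrow> \<mu> i \<noteq> 0"
  shows "Im (level_space W U f \<mu> c) = rows_span U {i. f i \<le> c}"
proof -
  have "Im (level_space W U f \<mu> c) = range (\<lambda>a. (\<chi> i. im_weight f \<mu> c i * a $ i) v* U)"
    by (simp add: Im_def level_space_def level_map_def image_image)
  also have "{i. im_weight f \<mu> c i \<noteq> 0} = {i. f i \<le> c}"
    using assms by (auto simp: im_weight_def)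
  then have "range (\<lambda>a. (\<chi> i. im_weight f \<mu> c i * a $ i) v* U) = rows_span U {i. f i \<le> c}"
    by (simp add: range_weighted_rows)
  finally show ?thesis .
qed

lemma Ker_level_space:
  assumes U: "orthonormal_rows U" and \<mu>: "\<And>i. f i = c \<Longrightarrow> \<mu> i \<noteq> 0"
  shows "Ker (level_space W U f \<mu> c) = rows_span W {i. c < f i}"
proof (intro equalityI subsetI)
  fix v assume "v \<in> Ker (level_space W U f \<mu> c)"
  then obtain a where "level_map W U f \<mu> c a = (v, 0)"
    by (auto simp: Ker_def level_space_def)
  then have v: "v = (\<chi> i. dom_weight f c i * a $ i) v* W" and "(\<chi> i. im_weight f \<mu> c i * a $ i) = 0"
    by (simp_all add: level_map_def vector_matrix_mult_eq_0_iff[OF U])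
  then have weighted: "im_weight f \<mu> c i * a $ i = 0" for i by (simp add: vec_eq_iff)
  have "a $ i = 0" if "f i \<le> c" for i
    using weighted[of i] \<mu>[of i] that by (cases "f i = c") (auto simp: im_weight_def)
  then have "\<forall>i. i \<notin> {i. c < f i} \<longrightarrow> (\<chi> i. dom_weight f c i * a $ i) $ i = 0" by simp
  then show "v \<in> rows_span W {i. c < f i}" unfolding v rows_span_def by blast
next
  fix v assume "v \<in> rows_span W {i. c < f i}"
  then obtain x where v: "v = x v* W" and x: "\<And>i. f i \<le> c \<Longrightarrow> x $ i = 0"
    unfolding rows_span_def by (auto simp: not_less)
  have "(\<chi> i. dom_weight f c i * x $ i) = x" "(\<chi> i. im_weight f \<mu> c i * x $ i) = 0"
    using x by (auto simp: vec_eq_iff dom_weight_def im_weight_def)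
  then have "level_map W U f \<mu> c x = (v, 0)" by (simp add: level_map_def v)
  then show "v \<in> Ker (level_space W U f \<mu> c)"
    unfolding Ker_def level_space_def by (intro CollectI range_eqI[where x=x]) simp
qed

lemma Indef_level_space:
  assumes W: "orthonormal_rows W"
  shows "Indef (level_space W U f \<mu> c) = rows_span U {i. f i < c}"
proof (intro equalityI subsetI)
  fix w assume "w \<in> Indef (level_space W U f \<mu> c)"
  then obtain a where "level_map W U f \<mu> c a = (0, w)"
    by (auto simp: Indef_def level_space_def)
  then have w: "w = (\<chi> i. im_weight f \<mu> c i * a $ i) v* U" and "(\<chi> i. dom_weight f c i * a $ i) = 0"
    by (simp_all add: level_map_def vector_matrix_mult_eq_0_iff[OF W])
  then have weighted: "dom_weight f c i * a $ i = 0" for i by (simp add: vec_eq_iff)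
  have "a $ i = 0" if "c \<le> f i" for i
    using weighted[of i] that by (simp add: dom_weight_def)
  then have "\<forall>i. i \<notin> {i. f i < c} \<longrightarrow> (\<chi> i. im_weight f \<mu> c i * a $ i) $ i = 0" by (simp add: not_less)
  then show "w \<in> rows_span U {i. f i < c}" unfolding w rows_span_def by blast
next
  fix w assume "w \<in> rows_span U {i. f i < c}"
  then obtain x where w: "w = x v* U" and x: "\<And>i. c \<le> f i \<Longrightarrow> x $ i = 0"
    unfolding rows_span_def by (auto simp: not_less)
  have "(\<chi> i. dom_weight f c i * x $ i) = 0" "(\<chi> i. im_weight f \<mu> c i * x $ i) = x"
    using x by (auto simp: vec_eq_iff dom_weight_def im_weight_def not_less)
  then have "level_map W U f \<mu> c x = (0, w)" by (simp add: level_map_def w)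
  then show "w \<in> Indef (level_space W U f \<mu> c)"
    unfolding Indef_def level_space_def by (intro CollectI range_eqI[where x=x]) simp
qed

lemma sorted_wrt_less_nth_less_iff:
  fixes xs :: "'a::linorder list"
  assumes xs: "sorted_wrt (<) xs" and i: "i < length xs" and j: "j < length xs"
  shows "xs ! i < xs ! j \<longleftrightarrow> i < j"
proof
  assume lt: "xs ! i < xs ! j"
  show "i < j"
  proof (rule ccontr)
    assume "\<not> i < j"
    then have "j < i \<or> j = i" by auto
    then show False using sorted_wrt_nth_less[OF xs _ i, of j] lt by auto
  qed
qed (rule sorted_wrt_nth_less[OF xs _ j])

lemma sorted_list_of_set_nth_less_iff_Suc_le:
  fixes A :: "'a::linorder set"
  assumes "finite A" and "x \<in> A" and k: "Suc k < length (sorted_list_of_set A)"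
  shows "sorted_list_of_set A ! k < x \<longleftrightarrow> sorted_list_of_set A ! Suc k \<le> x"
proof -
  let ?L = "sorted_list_of_set A"
  have s: "sorted_wrt (<) ?L" by (rule strict_sorted_list_of_set)
  obtain t where t: "t < length ?L" "?L ! t = x"
    using assms(1,2) by (metis in_set_conv_nth set_sorted_list_of_set)
  have "?L ! k < ?L ! t \<longleftrightarrow> k < t" using k t(1) by (intro sorted_wrt_less_nth_less_iff[OF s]) simp_all
  moreover have "?L ! t < ?L ! Suc k \<longleftrightarrow> t < Suc k" using k t(1) by (intro sorted_wrt_less_nth_less_iff[OF s])
  ultimately show ?thesis using t(2) by auto
qed

lemma sorted_list_of_set_bounds:
  fixes A :: "'a::linorder set"
  assumes "finite A" and "x \<in> A"
  shows "hd (sorted_list_of_set A) \<le> x" and "x \<le> last (sorted_list_of_set A)"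
proof -
  let ?L = "sorted_list_of_set A"
  have s: "sorted ?L" by simp
  obtain t where t: "t < length ?L" "?L ! t = x"
    using assms by (metis in_set_conv_nth set_sorted_list_of_set)
  then have ne: "?L \<noteq> []" by (metis less_nat_zero_code list.size(3))
  show "hd ?L \<le> x" using sorted_nth_mono[OF s, of 0 t] t ne by (simp add: hd_conv_nth)
  show "x \<le> last ?L" using sorted_nth_mono[OF s, of t "length ?L - 1"] t ne by (simp add: last_conv_nth)
qed

lemma is_hinge_level_spaces:
  fixes f :: "'n::finite \<Rightarrow> nat" and W U :: "complex ^ 'n ^ 'n" and \<mu> :: "nat \<Rightarrow> 'n \<Rightarrow> complex"
  assumes W: "orthonormal_rows W" and U: "orthonormal_rows U" and \<mu>: "\<And>i. \<mu> (f i) i \<noteq> 0"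
  shows "is_hinge (map (\<lambda>c. level_space W U f (\<mu> c) c) (sorted_list_of_set (range f)))"
proof -
  define L where "L = sorted_list_of_set (range f)"
  let ?P = "\<lambda>c. level_space W U f (\<mu> c) c"
  have setL: "set L = range f" by (simp add: L_def)
  then have L: "L \<noteq> []" by auto
  have \<mu>': "\<And>i. f i = c \<Longrightarrow> \<mu> c i \<noteq> 0" for c using \<mu> by blast
  have next_level: "L ! \<sigma> < f i \<longleftrightarrow> L ! Suc \<sigma> \<le> f i" if "Suc \<sigma> < length L" for \<sigma> i
    using sorted_list_of_set_nth_less_iff_Suc_le[of "range f" "f i" \<sigma>] that by (simp add: L_def)
  have chain: "Ker (?P (L ! \<sigma>)) = Dom (?P (L ! Suc \<sigma>)) \<and> Im (?P (L ! \<sigma>)) = Indef (?P (L ! Suc \<sigma>))"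
    if "Suc \<sigma> < length L" for \<sigma>
  proof -
    have "{i. L ! \<sigma> < f i} = {i. L ! Suc \<sigma> \<le> f i}" "{i. f i \<le> L ! \<sigma>} = {i. f i < L ! Suc \<sigma>}"
      using next_level[OF that] by (auto simp: not_less[symmetric])
    then show ?thesis
      by (simp add: Ker_level_space[OF U \<mu>'] Dom_level_space Im_level_space[OF \<mu>']
          Indef_level_space[OF W])
  qed
  have first: "Dom (?P (hd L)) = UNIV"
    using sorted_list_of_set_bounds(1)[of "range f"]
    by (simp add: Dom_level_space L_def rows_span_UNIV[OF W])
  have last: "Im (?P (last L)) = UNIV"
    using sorted_list_of_set_bounds(2)[of "range f"]
    by (simp add: Im_level_space[OF \<mu>'] L_def rows_span_UNIV[OF U])
  have rk: "0 < rk (?P (f m))" for m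
  proof (rule rk_pos_if_Ker_ne_Dom)
    show "csub2 (?P (f m))" by (rule level_space_complex_dim(1)[OF W U])
    have "W $ m \<in> Dom (?P (f m))" "W $ m \<notin> Ker (?P (f m))"
      by (simp_all add: Dom_level_space Ker_level_space[OF U \<mu>'] row_in_rows_span_iff[OF W])
    then show "Ker (?P (f m)) \<noteq> Dom (?P (f m))" by blast
  qed
  show ?thesis
    unfolding is_hinge_def L_def[symmetric]
    using L setL chain first last rk level_space_complex_dim[OF W U]
    by (auto simp: hd_map last_map)
qed

section \<open>Relative growth of singular values\<close>

locale singular_value_ratios =
  fixes D :: "nat \<Rightarrow> 'i::finite \<Rightarrow> real" and \<rho> :: "'i \<Rightarrow> 'i \<Rightarrow> real"
  assumes D_pos: "\<And>j i. 0 < D j i"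
    and ratio_limit: "\<And>a b. (\<lambda>j. D j a / (D j a + D j b)) \<longlonglongrightarrow> \<rho> a b"
begin

lemma \<rho>_bounds: "0 \<le> \<rho> a b" "\<rho> a b \<le> 1"
proof -
  have "0 \<le> D j a / (D j a + D j b)" "D j a / (D j a + D j b) \<le> 1" for j
    using D_pos[of j a] D_pos[of j b] by simp_all
  then show "0 \<le> \<rho> a b" "\<rho> a b \<le> 1"
    by (auto intro: LIMSEQ_le_const[OF ratio_limit] LIMSEQ_le_const2[OF ratio_limit])
qed

lemma \<rho>_add_swap: "\<rho> a b + \<rho> b a = 1"
proof -
  have "D j a / (D j a + D j b) + D j b / (D j b + D j a) = 1" for j
    using D_pos[of j a] D_pos[of j b] by (simp add: add.commute[of "D j b"] flip: add_divide_distrib)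
  then have "(\<lambda>j. 1) \<longlonglongrightarrow> \<rho> a b + \<rho> b a"
    using tendsto_add[OF ratio_limit ratio_limit, of a b b a] by simp
  then show ?thesis by (rule LIMSEQ_unique[OF tendsto_const, symmetric])
qed

lemma ratio_tendsto:
  assumes "0 < \<rho> a b"
  shows "(\<lambda>j. D j b / D j a) \<longlonglongrightarrow> (1 - \<rho> a b) / \<rho> a b"
proof -
  have eq: "(1 - D j a / (D j a + D j b)) / (D j a / (D j a + D j b)) = D j b / D j a" for j
  proof -
    have pos: "0 < D j a + D j b" using D_pos[of j a] D_pos[of j b] by simp
    then have "1 - D j a / (D j a + D j b) = D j b / (D j a + D j b)" by (simp add: field_simps)
    then show ?thesis using D_pos[of j a] pos by simp
  qed
  have "(\<lambda>j. (1 - D j a / (D j a + D j b)) / (D j a / (D j a + D j b)))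
      \<longlonglongrightarrow> (1 - \<rho> a b) / \<rho> a b"
    using assms by (intro tendsto_intros ratio_limit) simp
  then show ?thesis by (simp only: eq)
qed

lemma \<rho>_eq_0_iff: "\<rho> a b = 0 \<longleftrightarrow> (\<lambda>j. D j a / D j b) \<longlonglongrightarrow> 0"
proof
  assume "\<rho> a b = 0"
  then show "(\<lambda>j. D j a / D j b) \<longlonglongrightarrow> 0" using ratio_tendsto[of b a] \<rho>_add_swap[of a b] by simp
next
  assume lim: "(\<lambda>j. D j a / D j b) \<longlonglongrightarrow> 0"
  have "D j b / (D j b + D j a) = 1 / (1 + D j a / D j b)" for j
    using D_pos[of j a] D_pos[of j b] by (simp add: field_simps)
  moreover have "(\<lambda>j. 1 / (1 + D j a / D j b)) \<longlonglongrightarrow> 1 / (1 + 0)"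
    by (intro tendsto_intros lim) simp
  ultimately have "\<rho> b a = 1" using LIMSEQ_unique[OF ratio_limit[of b a]] by simp
  then show "\<rho> a b = 0" using \<rho>_add_swap[of a b] by simp
qed

lemma ratio_tendsto_0_trans:
  assumes "(\<lambda>j. D j x / D j y) \<longlonglongrightarrow> 0" and "(\<lambda>j. D j z / D j x) \<longlonglongrightarrow> t"
  shows "(\<lambda>j. D j z / D j y) \<longlonglongrightarrow> 0"
proof -
  have eq: "(D j z / D j x) * (D j x / D j y) = D j z / D j y" for j using D_pos[of j x] by simp
  have "(\<lambda>j. (D j z / D j x) * (D j x / D j y)) \<longlonglongrightarrow> t * 0" by (intro tendsto_mult assms)
  then show ?thesis by (simp only: eq mult_zero_right)
qed

text \<open>The number of indices whose singular values eventually dominate that of \<open>i\<close>;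
  indices of equal level have comparable singular values.\<close>
definition level :: "'i \<Rightarrow> nat" where
  "level i = card {l. \<rho> i l = 0}"

lemma level_less_if_\<rho>_eq_0:
  assumes "\<rho> m i = 0"
  shows "level i < level m"
proof -
  have "{l. \<rho> i l = 0} \<subseteq> {l. \<rho> m l = 0}"
    using assms ratio_tendsto_0_trans[of i _ m] by (auto simp: \<rho>_eq_0_iff)
  moreover have "i \<in> {l. \<rho> m l = 0}" "i \<notin> {l. \<rho> i l = 0}"
    using assms \<rho>_add_swap[of i i] by auto
  ultimately have "{l. \<rho> i l = 0} \<subset> {l. \<rho> m l = 0}" by blast
  then show ?thesis unfolding level_def by (rule psubset_card_mono[rotated]) simp
qed

lemma level_eq_if_\<rho>_between:
  assumes "0 < \<rho> m i" and "\<rho> m i < 1"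
  shows "level i = level m"
proof -
  have "0 < \<rho> i m" using assms \<rho>_add_swap[of m i] by simp
  then have "{l. \<rho> i l = 0} = {l. \<rho> m l = 0}"
    using ratio_tendsto_0_trans[OF _ ratio_tendsto[OF assms(1)]]
      ratio_tendsto_0_trans[OF _ ratio_tendsto[of i m]]
    by (auto simp: \<rho>_eq_0_iff)
  then show ?thesis by (simp add: level_def)
qed

lemma ratio_tendsto_0_if_level_less:
  assumes "level i < level m"
  shows "(\<lambda>j. D j m / D j i) \<longlonglongrightarrow> 0"
proof -
  have "\<rho> m i = 0"
    using \<rho>_bounds[of m i] \<rho>_add_swap[of m i] level_less_if_\<rho>_eq_0[of i m]
      level_eq_if_\<rho>_between[of m i] assms
    by (cases "\<rho> m i = 0 \<or> \<rho> m i = 1") auto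
  then show ?thesis by (simp add: \<rho>_eq_0_iff)
qed

lemma \<rho>_between_if_level_eq:
  assumes "level i = level m"
  shows "0 < \<rho> m i" and "\<rho> m i < 1"
  using \<rho>_bounds[of m i] \<rho>_add_swap[of m i] level_less_if_\<rho>_eq_0[of i m]
    level_less_if_\<rho>_eq_0[of m i] assms
  by (cases "\<rho> m i = 0 \<or> \<rho> m i = 1"; force)+

end

section \<open>Convergence of rescaled graphs\<close>

lemma graph_real_dim:
  fixes A :: "complex ^ 'n ^ 'n"
  shows "subspace (graph A)" and "dim (graph A) = dim (UNIV :: (complex ^ 'n) set)"
proof -
  have g: "graph A = range (\<lambda>v. (v, A *v v))" by (auto simp: graph_def)
  have "Vector_Spaces.linear (*s) pscale (\<lambda>v. (v, A *v v))"
    by (intro linear_pscale_pairI vec.linear_id[unfolded id_def] matrix_vector_mul_linear_gen)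
  moreover have "inj (\<lambda>v. (v, A *v v))" by (auto intro: injI)
  ultimately show "subspace (graph A)" and "dim (graph A) = dim (UNIV :: (complex ^ 'n) set)"
    unfolding g using range_injective_linear by blast+
qed

lemma mat_matrix_vector_mult: "(mat c ** A) *v x = c *s (A *v (x :: 'a::comm_ring_1 ^ 'n))"
proof -
  have "mat c *v y = c *s y" for y :: "'a ^ 'm"
    by (simp add: vec_eq_iff matrix_vector_mult_def mat_def if_distrib if_distribR cong del: if_weak_cong)
  then show ?thesis by (simp flip: matrix_vector_mul_assoc)
qed

lemma matrix_vector_mult_rows:
  fixes g :: "'a::field ^ 'n ^ 'm"
  assumes "\<And>i. g *v (w $ i) = d i *s (u $ i)"
  shows "g *v (x v* w) = (\<chi> i. d i * x $ i) v* u"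
proof -
  have "g *v (\<Sum>i\<in>S. x $ i *s w $ i) = (\<Sum>i\<in>S. x $ i *s (g *v w $ i))" for S
    by (induction S rule: infinite_finite_induct)
      (simp_all add: matrix_vector_right_distrib vector_scalar_commute)
  then show ?thesis
    using assms by (simp add: vector_matrix_mult_eq_sum vector_smult_assoc mult.commute)
qed

locale convergent_svd = singular_value_ratios D \<rho>
  for D :: "nat \<Rightarrow> 'n::finite \<Rightarrow> real" and \<rho> +
  fixes h w u :: "nat \<Rightarrow> complex ^ 'n ^ 'n" and W U :: "complex ^ 'n ^ 'n"
  assumes orthonormal_w: "\<And>j. orthonormal_rows (w j)"
    and orthonormal_u: "\<And>j. orthonormal_rows (u j)"
    and svd: "\<And>j i. h j *v (w j $ i) = complex_of_real (D j i) *s (u j $ i)"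
    and w_limit: "w \<longlonglongrightarrow> W" and u_limit: "u \<longlonglongrightarrow> U"
begin

lemma orthonormal_W: "orthonormal_rows W" and orthonormal_U: "orthonormal_rows U"
  by (rule orthonormal_rows_limit[OF w_limit orthonormal_w] orthonormal_rows_limit[OF u_limit orthonormal_u])+

definition limit_ratio :: "'n \<Rightarrow> 'n \<Rightarrow> complex" where
  "limit_ratio m i = complex_of_real ((1 - \<rho> m i) / \<rho> m i)"

lemma limit_ratio_nonzero: "level i = level m \<Longrightarrow> limit_ratio m i \<noteq> 0"
  using \<rho>_between_if_level_eq[of i m] by (simp add: limit_ratio_def)

lemma damped_coefficients_tendsto:
  "(\<lambda>j. \<chi> i. if level m \<le> level i then a $ i else complex_of_real (D j m / D j i) * a $ i)
     \<longlonglongrightarrow> (\<chi> i. dom_weight level (level m) i * a $ i)"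
proof (rule vec_tendstoI)
  fix i
  show "(\<lambda>j. (\<chi> i. if level m \<le> level i then a $ i else complex_of_real (D j m / D j i) * a $ i) $ i)
      \<longlonglongrightarrow> (\<chi> i. dom_weight level (level m) i * a $ i) $ i"
  proof (cases "level m \<le> level i")
    case False
    then have "(\<lambda>j. complex_of_real (D j m / D j i) * a $ i) \<longlonglongrightarrow> complex_of_real 0 * a $ i"
      by (intro tendsto_mult tendsto_const tendsto_of_real ratio_tendsto_0_if_level_less) simp
    then show ?thesis using False by (simp add: dom_weight_def)
  qed (simp add: dom_weight_def)
qed

lemma rescaled_coefficients_tendsto:
  "(\<lambda>j. \<chi> i. if level m \<le> level i then complex_of_real (D j i / D j m) * a $ i else a $ i)
     \<longlonglongrightarrow> (\<chi> i. im_weight level (limit_ratio m) (level m) i * a $ i)"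
proof (rule vec_tendstoI)
  fix i
  show "(\<lambda>j. (\<chi> i. if level m \<le> level i then complex_of_real (D j i / D j m) * a $ i else a $ i) $ i)
      \<longlonglongrightarrow> (\<chi> i. im_weight level (limit_ratio m) (level m) i * a $ i) $ i"
  proof (cases rule: linorder_cases[of "level m" "level i"])
    case less
    then have "(\<lambda>j. complex_of_real (D j i / D j m) * a $ i) \<longlonglongrightarrow> complex_of_real 0 * a $ i"
      by (intro tendsto_mult tendsto_const tendsto_of_real ratio_tendsto_0_if_level_less)
    then show ?thesis using less by (simp add: im_weight_def)
  next
    case equal
    then have "(\<lambda>j. complex_of_real (D j i / D j m) * a $ i) \<longlonglongrightarrow> limit_ratio m i * a $ i"
      unfolding limit_ratio_def
      by (intro tendsto_mult tendsto_const tendsto_of_real ratio_tendsto \<rho>_between_if_level_eq) simp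
    then show ?thesis using equal by (simp add: im_weight_def)
  next
    case greater
    then show ?thesis by (simp add: im_weight_def)
  qed
qed

text \<open>A point \<open>level_map \<dots> a\<close> of the limit is approximated by graph points over
  \<open>x v* w j\<close>, where the coefficients of the larger singular values are damped by
  \<open>D j m / D j i\<close> so that their images stay bounded.\<close>
lemma scaled_graph_tendsto:
  "gr_tendsto (\<lambda>j. graph (mat (complex_of_real (1 / D j m)) ** h j))
     (level_space W U level (limit_ratio m) (level m))"
  unfolding gr_tendsto_def
proof (intro allI closest_point_tendsto_if_approx)
  let ?c = "level m" and ?A = "\<lambda>j. mat (complex_of_real (1 / D j m)) ** h j"
  show "subspace (level_space W U level (limit_ratio m) ?c)"
    using level_space_real_dim(1)[OF orthonormal_W orthonormal_U] .
  show "subspace (graph (?A j))" and "dim (graph (?A j)) = dim (level_space W U level (limit_ratio m) ?c)"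
    for j using graph_real_dim level_space_real_dim(2)[OF orthonormal_W orthonormal_U] by simp_all
  fix p assume "p \<in> level_space W U level (limit_ratio m) ?c"
  then obtain a where p: "p = level_map W U level (limit_ratio m) ?c a"
    by (auto simp: level_space_def)
  define x where "x j = (\<chi> i. if ?c \<le> level i then a $ i else complex_of_real (D j m / D j i) * a $ i)" for j
  define y where "y j = (\<chi> i. if ?c \<le> level i then complex_of_real (D j i / D j m) * a $ i else a $ i)" for j
  have image: "?A j *v (x j v* w j) = y j v* u j" for j
  proof -
    let ?d = "\<chi> i. complex_of_real (D j i) * x j $ i"
    have "?A j *v (x j v* w j) = complex_of_real (1 / D j m) *s (?d v* u j)"
      by (simp add: mat_matrix_vector_mult matrix_vector_mult_rows[OF svd])
    also have "\<dots> = (complex_of_real (1 / D j m) *s ?d) v* u j"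
      by (rule scalar_vector_matrix_assoc[symmetric])
    also have "complex_of_real (1 / D j m) *s ?d = y j"
      using D_pos[of j] by (simp add: vec_eq_iff x_def y_def field_simps less_imp_neq[symmetric])
    finally show ?thesis .
  qed
  have x: "x \<longlonglongrightarrow> (\<chi> i. dom_weight level ?c i * a $ i)"
    unfolding x_def by (rule damped_coefficients_tendsto)
  have y: "y \<longlonglongrightarrow> (\<chi> i. im_weight level (limit_ratio m) ?c i * a $ i)"
    unfolding y_def by (rule rescaled_coefficients_tendsto)
  have "(\<lambda>j. (x j v* w j, ?A j *v (x j v* w j))) \<longlonglongrightarrow> p"
    unfolding image p level_map_def
    by (rule tendsto_Pair[OF tendsto_vector_matrix_mult[OF x w_limit] tendsto_vector_matrix_mult[OF y u_limit]])
  moreover have "(x j v* w j, ?A j *v (x j v* w j)) \<in> graph (?A j)" for j by (auto simp: graph_def)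
  ultimately show "\<exists>q. (\<forall>j. q j \<in> graph (?A j)) \<and> q \<longlonglongrightarrow> p"
    by (intro exI[of _ "\<lambda>j. (x j v* w j, ?A j *v (x j v* w j))"]) simp
qed

lemma hinge_limit:
  "\<exists>Ps \<beta>. is_hinge Ps \<and>
     (\<forall>\<sigma> < length Ps. (\<forall>j. \<beta> \<sigma> j \<noteq> 0) \<and> gr_tendsto (\<lambda>j. graph (mat (\<beta> \<sigma> j) ** h j)) (Ps ! \<sigma>))"
proof -
  define L where "L = sorted_list_of_set (range level)"
  define rep where "rep c = (SOME m. level m = c)" for c
  have rep: "level (rep c) = c" if "c \<in> range level" for c
    using that unfolding rep_def by (metis (mono_tags) imageE someI_ex)
  define Ps where "Ps = map (\<lambda>c. level_space W U level (limit_ratio (rep c)) c) L"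
  define \<beta> where "\<beta> \<sigma> j = complex_of_real (1 / D j (rep (L ! \<sigma>)))" for \<sigma> j
  have "is_hinge Ps"
    unfolding Ps_def L_def
    by (rule is_hinge_level_spaces[OF orthonormal_W orthonormal_U])
      (simp add: limit_ratio_nonzero rep)
  moreover have "\<beta> \<sigma> j \<noteq> 0" for \<sigma> j using D_pos by (simp add: \<beta>_def less_imp_neq[symmetric])
  moreover have "gr_tendsto (\<lambda>j. graph (mat (\<beta> \<sigma> j) ** h j)) (Ps ! \<sigma>)" if "\<sigma> < length Ps" for \<sigma>
  proof -
    have "L ! \<sigma> \<in> set L" using that by (simp add: Ps_def)
    then have "L ! \<sigma> \<in> range level" by (simp add: L_def)
    then have "Ps ! \<sigma> = level_space W U level (limit_ratio (rep (L ! \<sigma>))) (level (rep (L ! \<sigma>)))"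
      using that by (simp add: Ps_def rep)
    then show ?thesis unfolding \<beta>_def by (simp only: scaled_graph_tendsto)
  qed
  ultimately show ?thesis by blast
qed

end

lemma convergent_svd_subsequence:
  fixes g :: "nat \<Rightarrow> complex ^ 'n ^ 'n"
  assumes inv: "\<And>j. invertible (g j)"
  obtains r D \<rho> w u W U where "strict_mono r" and "convergent_svd D \<rho> (g \<circ> r) w u W U"
proof -
  have "\<forall>j. \<exists>(w :: complex ^ 'n ^ 'n) u d. orthonormal_rows w \<and> orthonormal_rows u \<and>
      (\<forall>i. 0 < d i) \<and> (\<forall>i. g j *v (w $ i) = complex_of_real (d i) *s (u $ i))" (is "\<forall>j. ?svd j")
  proof
    show "?svd j" for j by (rule singular_value_decomposition[OF inv[of j]]) blast
  qed
  then obtain w u :: "nat \<Rightarrow> complex ^ 'n ^ 'n" and d :: "nat \<Rightarrow> 'n \<Rightarrow> real"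
    where w: "\<And>j. orthonormal_rows (w j)" and u: "\<And>j. orthonormal_rows (u j)"
      and d: "\<And>j i. 0 < d j i" and svd: "\<And>j i. g j *v (w j $ i) = complex_of_real (d j i) *s (u j $ i)"
    by metis
  define ratios :: "nat \<Rightarrow> real ^ ('n \<times> 'n)"
    where "ratios j = (\<chi> p. d j (fst p) / (d j (fst p) + d j (snd p)))" for j
  have "0 \<le> ratios j" and "ratios j \<le> 1" for j
  proof -
    have "0 \<le> d j a / (d j a + d j b) \<and> d j a / (d j a + d j b) \<le> 1" for a b
      using d[of j a] d[of j b] by simp
    then show "0 \<le> ratios j" "ratios j \<le> 1" by (simp_all add: ratios_def less_eq_vec_def)
  qed
  then have "range (\<lambda>j. (w j, u j, ratios j))
      \<subseteq> {x. orthonormal_rows x} \<times> {x. orthonormal_rows x} \<times> cbox 0 1"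
    using w u by (auto simp flip: interval_cbox_cart)
  moreover have "bounded {x :: complex ^ 'n ^ 'n. orthonormal_rows x}"
    using norm_le_card_if_orthonormal_rows unfolding bounded_iff by blast
  ultimately have "bounded (range (\<lambda>j. (w j, u j, ratios j)))"
    by (intro bounded_subset[OF bounded_Times[OF _ bounded_Times[OF _ bounded_cbox]]])
  then obtain lim r where r: "strict_mono r" and lim: "((\<lambda>j. (w j, u j, ratios j)) \<circ> r) \<longlonglongrightarrow> lim"
    using bounded_imp_convergent_subsequence by blast
  obtain W U S where "lim = (W, U, S)" by (cases lim) auto
  then have limits: "(w \<circ> r) \<longlonglongrightarrow> W" "(u \<circ> r) \<longlonglongrightarrow> U" and "(ratios \<circ> r) \<longlonglongrightarrow> S"
    using tendsto_fst[OF lim] tendsto_fst[OF tendsto_snd[OF lim]] tendsto_snd[OF tendsto_snd[OF lim]]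
    by (simp_all add: o_def)
  then have ratio: "(\<lambda>j. d (r j) a / (d (r j) a + d (r j) b)) \<longlonglongrightarrow> S $ (a, b)" for a b
    using tendsto_vec_nth[of "ratios \<circ> r" S sequentially "(a, b)"] by (simp add: ratios_def o_def)
  have "convergent_svd (\<lambda>j. d (r j)) (\<lambda>a b. S $ (a, b)) (g \<circ> r) (w \<circ> r) (u \<circ> r) W U"
    by unfold_locales (simp_all add: d w u svd ratio limits)
  with r show ?thesis by (rule that)
qed

theorem lemma2p1:
  fixes g :: "nat \<Rightarrow> complex ^ 'n ^ 'n"
  assumes "\<forall>j. invertible (g j)"
  shows "\<exists>r Ps \<beta>. strict_mono r \<and> is_hinge Ps \<and>
           (\<forall>\<sigma> < length Ps. (\<forall>j. \<beta> \<sigma> j \<noteq> (0::complex)) \<and>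
              gr_tendsto (\<lambda>j. graph (mat (\<beta> \<sigma> j) ** g (r j))) (Ps ! \<sigma>))"
proof -
  obtain r D \<rho> w u W U where r: "strict_mono r" and "convergent_svd D \<rho> (g \<circ> r) w u W U"
    using convergent_svd_subsequence assms by blast
  then obtain Ps \<beta> where "is_hinge Ps"
    and "\<forall>\<sigma> < length Ps. (\<forall>j. \<beta> \<sigma> j \<noteq> 0) \<and> gr_tendsto (\<lambda>j. graph (mat (\<beta> \<sigma> j) ** g (r j))) (Ps ! \<sigma>)"
    using convergent_svd.hinge_limit unfolding o_def by blast
  with r show ?thesis by blast
qed

end
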